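(* Let $\kappa$ be an infinite cardinal. The set $S=T\cap M_3[\mathcal{F}(\kappa)]$ is a bounded sublattice of the lattice $M_3[\mathcal{F}(\kappa)]$.
   Context: $\mathcal{F}(\kappa)$ is the Boolean lattice of subsets $X\subseteq\kappa$ that are finite or cofinite. For sets $A,B,C$, $\mu(A,B,C)=(A\cap B)\cup(A\cap C)\cup(B\cap C)$. $T=\{(A,B,C)\in\mathcal{F}(\kappa)^3 : C\setminus\mu(A,B,C)\text{ is finite}\}$. A triple is balanced if $A\cap B=A\cap C=B\cap C$; $M_3[\mathcal{F}(\kappa)]$ is the set of balanced triples in $\mathcal{F}(\kappa)^3$, a lattice under the componentwise order with componentwise intersection as meet and join $(A,B,C)\vee(A',B',C')=(U_1\cup m,U_2\cup m,U_3\cup m)$ where $U_1=A\cup A'$, $U_2=B\cup B'$, $U_3=C\cup C'$, $m=\mu(U_1,U_2,U_3)$; its bounds are $(\emptyset,\emptyset,\emptyset)$ and $(\kappa,\kappa,\kappa)$. *)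

theory Defs
  imports Main
begin

text \<open>The Boolean lattice F(kappa) of finite or cofinite subsets of the type 'a
  (kappa is represented by the universe of an infinite type 'a).\<close>
definition FinCofin :: "'a set set" where
  "FinCofin = {X. finite X \<or> finite (- X)}"

definition mu :: "'a set \<Rightarrow> 'a set \<Rightarrow> 'a set \<Rightarrow> 'a set" where
  "mu A B C = (A \<inter> B) \<union> (A \<inter> C) \<union> (B \<inter> C)"

type_synonym 'a triple = "'a set \<times> 'a set \<times> 'a set"

definition Tset :: "'a triple set" where
  "Tset = {(A, B, C). A \<in> FinCofin \<and> B \<in> FinCofin \<and> C \<in> FinCofin
                      \<and> finite (C - mu A B C)}"

definition balanced :: "'a triple \<Rightarrow> bool" where
  "balanced t = (case t of (A, B, C) \<Rightarrow> A \<inter> B = A \<inter> C \<and> A \<inter> C = B \<inter> C)"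

definition M3 :: "'a triple set" where
  "M3 = {(A, B, C). A \<in> FinCofin \<and> B \<in> FinCofin \<and> C \<in> FinCofin \<and> balanced (A, B, C)}"

definition meet3 :: "'a triple \<Rightarrow> 'a triple \<Rightarrow> 'a triple" where
  "meet3 s t = (case s of (A, B, C) \<Rightarrow> case t of (A', B', C') \<Rightarrow>
                  (A \<inter> A', B \<inter> B', C \<inter> C'))"

definition join3 :: "'a triple \<Rightarrow> 'a triple \<Rightarrow> 'a triple" where
  "join3 s t = (case s of (A, B, C) \<Rightarrow> case t of (A', B', C') \<Rightarrow>
                  (let U1 = A \<union> A'; U2 = B \<union> B'; U3 = C \<union> C'; m = mu U1 U2 U3
                   in (U1 \<union> m, U2 \<union> m, U3 \<union> m)))"

definition bot3 :: "'a triple" where "bot3 = ({}, {}, {})"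
definition top3 :: "'a triple" where "top3 = (UNIV, UNIV, UNIV)"

definition bounded_sublattice_M3 :: "'a triple set \<Rightarrow> bool" where
  "bounded_sublattice_M3 S \<longleftrightarrow> S \<subseteq> M3
     \<and> (\<forall>s\<in>S. \<forall>t\<in>S. meet3 s t \<in> S \<and> join3 s t \<in> S)
     \<and> bot3 \<in> S \<and> top3 \<in> S"

end

theory Submission
  imports Defs
begin

text \<open>On a balanced triple the majority set \<open>\<mu>(A,B,C)\<close> is just the common pairwise
  intersection, so membership in \<open>T\<close> says that \<open>C\<close> exceeds \<open>A \<inter> B\<close> by finitely many
  points. Both lattice operations keep this excess inside the union of the two given
  excesses: for meets because intersections shrink \<open>C\<close>, for joins because a point of
  \<open>C \<union> C'\<close> outside the new pairwise intersection lies outside \<open>A \<union> A'\<close> or \<open>B \<union> B'\<close>.\<close>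

lemma FinCofin_Un: "X \<in> FinCofin \<Longrightarrow> Y \<in> FinCofin \<Longrightarrow> X \<union> Y \<in> FinCofin"
  unfolding FinCofin_def by (auto simp: Compl_Un intro: finite_subset)

lemma FinCofin_Int: "X \<in> FinCofin \<Longrightarrow> Y \<in> FinCofin \<Longrightarrow> X \<inter> Y \<in> FinCofin"
  unfolding FinCofin_def by (auto simp: Compl_Int intro: finite_subset)

lemma FinCofin_mu:
  "X \<in> FinCofin \<Longrightarrow> Y \<in> FinCofin \<Longrightarrow> Z \<in> FinCofin \<Longrightarrow> mu X Y Z \<in> FinCofin"
  unfolding mu_def by (intro FinCofin_Un FinCofin_Int)

lemma mu_balanced: "balanced (A, B, C) \<Longrightarrow> mu A B C = A \<inter> B"
  unfolding mu_def balanced_def by auto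

lemma Tset_Int_M3_iff:
  "(A, B, C) \<in> Tset \<inter> M3 \<longleftrightarrow>
     A \<in> FinCofin \<and> B \<in> FinCofin \<and> C \<in> FinCofin \<and> balanced (A, B, C)
     \<and> finite (C - A \<inter> B)"
  unfolding Tset_def M3_def by (auto simp: mu_balanced)

lemma meet3_Tset_Int_M3:
  assumes "s \<in> Tset \<inter> M3" and "t \<in> Tset \<inter> M3"
  shows "meet3 s t \<in> Tset \<inter> M3"
proof -
  obtain A B C A' B' C' where st: "s = (A, B, C)" "t = (A', B', C')"
    by (cases s, cases t) auto
  note S = assms(1)[unfolded st Tset_Int_M3_iff]
    and T = assms(2)[unfolded st Tset_Int_M3_iff]
  have meet: "meet3 s t = (A \<inter> A', B \<inter> B', C \<inter> C')"
    unfolding st meet3_def by simp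
  have "C \<inter> C' - A \<inter> A' \<inter> (B \<inter> B') \<subseteq> (C - A \<inter> B) \<union> (C' - A' \<inter> B')"
    by blast
  then have "finite (C \<inter> C' - A \<inter> A' \<inter> (B \<inter> B'))"
    using S T by (meson finite_UnI finite_subset)
  moreover have "balanced (A \<inter> A', B \<inter> B', C \<inter> C')"
    using S T unfolding balanced_def by auto
  ultimately show ?thesis
    using S T unfolding meet Tset_Int_M3_iff by (auto intro: FinCofin_Int)
qed

lemma join3_Tset_Int_M3:
  assumes "s \<in> Tset \<inter> M3" and "t \<in> Tset \<inter> M3"
  shows "join3 s t \<in> Tset \<inter> M3"
proof -
  obtain A B C A' B' C' where st: "s = (A, B, C)" "t = (A', B', C')"
    by (cases s, cases t) auto
  note S = assms(1)[unfolded st Tset_Int_M3_iff]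
    and T = assms(2)[unfolded st Tset_Int_M3_iff]
  define m where "m = mu (A \<union> A') (B \<union> B') (C \<union> C')"
  have join: "join3 s t = (A \<union> A' \<union> m, B \<union> B' \<union> m, C \<union> C' \<union> m)"
    unfolding st join3_def m_def Let_def by simp
  have "m \<in> FinCofin"
    unfolding m_def using S T by (intro FinCofin_mu FinCofin_Un) auto
  moreover have "balanced (A \<union> A' \<union> m, B \<union> B' \<union> m, C \<union> C' \<union> m)"
    unfolding balanced_def m_def mu_def by auto
  moreover have "C \<union> C' \<union> m - (A \<union> A' \<union> m) \<inter> (B \<union> B' \<union> m)
      \<subseteq> (C - A \<inter> B) \<union> (C' - A' \<inter> B')"
    unfolding m_def mu_def by blast
  then have "finite (C \<union> C' \<union> m - (A \<union> A' \<union> m) \<inter> (B \<union> B' \<union> m))"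
    using S T by (meson finite_UnI finite_subset)
  ultimately show ?thesis
    using S T unfolding join Tset_Int_M3_iff by (auto intro: FinCofin_Un)
qed

lemma bot3_Tset_Int_M3: "bot3 \<in> Tset \<inter> M3"
  unfolding bot3_def Tset_Int_M3_iff FinCofin_def balanced_def by auto

lemma top3_Tset_Int_M3: "top3 \<in> Tset \<inter> M3"
  unfolding top3_def Tset_Int_M3_iff FinCofin_def balanced_def by auto

theorem lemma3p3:
  assumes "infinite (UNIV :: 'a set)"
  shows "bounded_sublattice_M3 (Tset \<inter> (M3 :: 'a triple set))"
  unfolding bounded_sublattice_M3_def
  using meet3_Tset_Int_M3 join3_Tset_Int_M3 bot3_Tset_Int_M3 top3_Tset_Int_M3
  by blast

end
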